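(* Let $\{f_n\}\subset\mathcal X_B$ converge in $(\mathcal X_M',\tau_{AW})$ to $f\in\mathcal X_M'$. Then one of the following holds: (1) $f$ is an MGF; (2) $f(0)<1$; (3) $f$ mimics an MGF, i.e. $f$ is not an MGF but there is a probability measure $\nu$ with $f(\theta)=f_\nu(\theta)$ for all $\theta\in\mathcal D_f$.
   Context: For a probability measure $\nu$ on $\mathbb R$ let $f_\nu(\theta)=\int e^{\theta x}\nu(dx)\in(0,\infty]$; a function is an MGF if it equals $f_\nu$ for some probability measure $\nu$. $\mathcal X_B=\{f_\nu:\nu$ a compactly supported probability measure on $\mathbb R\}$. For $f:\mathbb R\to[-\infty,\infty]$, $\mathrm{epi}(f)=\{(\theta,b):b\ge f(\theta)\}$, $\mathcal D_f=\{\theta:f(\theta)<\infty\}$. On $\mathbb R^2$ use the box metric $d(x,y)=\max(|x_1-y_1|,|x_2-y_2|)$, $d(x,A)=\inf_{y\in A}d(x,y)$. $\mathcal X_M'$ is the set of lower semicontinuous convex $f:\mathbb R\to[0,\infty]$ with $f(0)<\infty$, equipped with the Attouch–Wets topology $\tau_{AW}$: $f_n\to f$ iff for every bounded $B\subset\mathbb R^2$, $\sup_{x\in B}|d(x,\mathrm{epi}(f_n))-d(x,\mathrm{epi}(f))|\to0$. *)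

theory Defs
  imports "HOL-Analysis.Analysis" "HOL-Probability.Probability"
begin

definition mgf :: "real measure \<Rightarrow> real \<Rightarrow> ereal" where
  "mgf M \<theta> = enn2ereal (\<integral>\<^sup>+ x. ennreal (exp (\<theta> * x)) \<partial>M)"

definition real_prob_measure :: "real measure \<Rightarrow> bool" where
  "real_prob_measure M \<longleftrightarrow> prob_space M \<and> sets M = sets borel"

definition is_MGF :: "(real \<Rightarrow> ereal) \<Rightarrow> bool" where
  "is_MGF f \<longleftrightarrow> (\<exists>M. real_prob_measure M \<and> f = mgf M)"

definition in_XB :: "(real \<Rightarrow> ereal) \<Rightarrow> bool" where
  "in_XB f \<longleftrightarrow> (\<exists>M. real_prob_measure M \<and> (\<exists>K. compact K \<and> K \<in> sets M \<and> measure M K = 1)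
                    \<and> f = mgf M)"

definition epi :: "(real \<Rightarrow> ereal) \<Rightarrow> (real \<times> real) set" where
  "epi f = {(\<theta>, b). ereal b \<ge> f \<theta>}"

definition dom_f :: "(real \<Rightarrow> ereal) \<Rightarrow> real set" where
  "dom_f f = {\<theta>. f \<theta> < \<infinity>}"

definition box_dist :: "real \<times> real \<Rightarrow> real \<times> real \<Rightarrow> real" where
  "box_dist x y = max \<bar>fst x - fst y\<bar> \<bar>snd x - snd y\<bar>"

definition box_setdist :: "real \<times> real \<Rightarrow> (real \<times> real) set \<Rightarrow> real" where
  "box_setdist x A = (INF y\<in>A. box_dist x y)"

definition lsc_fun :: "(real \<Rightarrow> ereal) \<Rightarrow> bool" where
  "lsc_fun f \<longleftrightarrow> (\<forall>x. f x \<le> Liminf (at x) f)"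

definition convex_fun :: "(real \<Rightarrow> ereal) \<Rightarrow> bool" where
  "convex_fun f \<longleftrightarrow> (\<forall>x y t. 0 \<le> t \<and> t \<le> 1 \<longrightarrow>
      f (t * x + (1 - t) * y) \<le> ereal t * f x + ereal (1 - t) * f y)"

definition in_XM' :: "(real \<Rightarrow> ereal) \<Rightarrow> bool" where
  "in_XM' f \<longleftrightarrow> lsc_fun f \<and> convex_fun f \<and> (\<forall>\<theta>. f \<theta> \<ge> 0) \<and> f 0 < \<infinity>"

definition AW_conv :: "(nat \<Rightarrow> real \<Rightarrow> ereal) \<Rightarrow> (real \<Rightarrow> ereal) \<Rightarrow> bool" where
  "AW_conv fs f \<longleftrightarrow> (\<forall>B. bounded B \<longrightarrow>
     (\<forall>\<epsilon>>0. \<forall>\<^sub>F n in sequentially. \<forall>x\<in>B.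
        \<bar>box_setdist x (epi (fs n)) - box_setdist x (epi f)\<bar> \<le> \<epsilon>))"

definition mimics_MGF :: "(real \<Rightarrow> ereal) \<Rightarrow> bool" where
  "mimics_MGF f \<longleftrightarrow> \<not> is_MGF f \<and>
     (\<exists>M. real_prob_measure M \<and> (\<forall>\<theta>\<in>dom_f f. f \<theta> = mgf M \<theta>))"

end

theory Submission
  imports Defs
begin

text \<open>Write \<open>f\<^sub>n\<close> as the finite moment generating function of a compactly supported
  \<open>\<nu>\<^sub>n\<close>. Attouch--Wets convergence of the epigraphs gives \<open>f \<le> liminf f\<^sub>n\<close> everywhere,
  hence \<open>f 0 \<le> 1\<close>, and, using convexity of the \<open>f\<^sub>n\<close>, \<open>f\<^sub>n \<rightarrow> f\<close> on the interior
  of \<open>dom f\<close>. Suppose \<open>f 0 = 1\<close>. If that interior is empty, then \<open>dom f = {0}\<close> and the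
  Dirac mass at \<open>0\<close> will do. Otherwise choose an interior point \<open>c\<close> with \<open>f c > 0\<close> and
  tilt \<open>\<nu>\<^sub>n\<close> by \<open>exp (c x) / f\<^sub>n c\<close>: the tilted moment generating functions converge on a
  neighbourhood of \<open>0\<close>, so the tilted measures are tight, and a weak limit point has moment
  generating function \<open>f (c + s) / f c\<close> there. Tilting back gives a measure \<open>\<nu>\<close> with
  \<open>mgf \<nu> = f\<close> on the interior of \<open>dom f\<close>; both functions are convex and lower
  semicontinuous, so they also agree at the boundary points of \<open>dom f\<close> (approach them along
  segments from \<open>c\<close>), and \<open>f 0 = 1\<close> makes \<open>\<nu>\<close> a probability measure.\<close>

section \<open>Epigraphs and Attouch--Wets convergence\<close>

lemma lsc_fun_iff: "lsc_fun f \<longleftrightarrow> (\<forall>x y. y < f x \<longrightarrow> (\<forall>\<^sub>F t in at x. y < f t))"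
  unfolding lsc_fun_def le_Liminf_iff by blast

lemma lsc_fun_eventually_nhds:
  assumes "lsc_fun f" "y < f x"
  shows "\<forall>\<^sub>F t in nhds x. y < f t"
  using assms unfolding lsc_fun_iff eventually_nhds_conv_at by blast

lemma lsc_fun_ball:
  assumes "lsc_fun f" "y < f x"
  obtains d where "d > 0" "\<And>t. \<bar>t - x\<bar> < d \<Longrightarrow> y < f t"
  using lsc_fun_eventually_nhds[OF assms] unfolding eventually_nhds_metric dist_real_def by blast

lemma lsc_fun_tendsto:
  assumes "lsc_fun f" "p \<longlonglongrightarrow> x" "y < f x"
  shows "\<forall>\<^sub>F k in sequentially. y < f (p k)"
  using eventually_compose_filterlim[OF lsc_fun_eventually_nhds[OF assms(1,3)] assms(2)] .

lemma box_dist_nonneg: "0 \<le> box_dist x y"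
  by (simp add: box_dist_def)

lemma box_setdist_le: "y \<in> A \<Longrightarrow> box_setdist x A \<le> box_dist x y"
  unfolding box_setdist_def
  by (rule cINF_lower) (auto intro!: bdd_belowI[of _ 0] simp: box_dist_nonneg)

lemma box_setdist_eq_0: "x \<in> A \<Longrightarrow> box_setdist x A = 0"
proof -
  assume "x \<in> A"
  then have "box_setdist x A \<le> 0" using box_setdist_le[of x A x] by (simp add: box_dist_def)
  moreover have "0 \<le> box_setdist x A"
    unfolding box_setdist_def using \<open>x \<in> A\<close> by (intro cINF_greatest) (auto simp: box_dist_nonneg)
  ultimately show ?thesis by simp
qed

lemma box_setdist_less_iff:
  assumes "A \<noteq> {}"
  shows "box_setdist x A < e \<longleftrightarrow> (\<exists>y\<in>A. box_dist x y < e)"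
  unfolding box_setdist_def using assms
  by (subst cINF_less_iff) (auto intro!: bdd_belowI[of _ 0] simp: box_dist_nonneg)

lemma box_setdist_diff_less_imp_near:
  assumes "x \<in> A" "B \<noteq> {}" "\<bar>box_setdist x A - box_setdist x B\<bar> < e"
  shows "\<exists>y\<in>B. box_dist x y < e"
  using assms box_setdist_less_iff[OF assms(2)] by (simp add: box_setdist_eq_0 abs_less_iff)

lemma mem_epi [simp]: "(a, b) \<in> epi g \<longleftrightarrow> g a \<le> ereal b"
  by (simp add: epi_def)

lemma epi_nonempty:
  assumes "g t < \<infinity>"
  shows "epi g \<noteq> {}"
proof -
  have "(t, real_of_ereal (g t)) \<in> epi g" using assms by (cases "g t") auto
  then show ?thesis by blast
qed

lemma AW_conv_eventually_less:
  assumes "AW_conv fs f" "bounded B" "e > 0"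
  shows "\<forall>\<^sub>F n in sequentially. \<forall>x\<in>B. \<bar>box_setdist x (epi (fs n)) - box_setdist x (epi f)\<bar> < e"
proof -
  have "\<forall>\<^sub>F n in sequentially. \<forall>x\<in>B. \<bar>box_setdist x (epi (fs n)) - box_setdist x (epi f)\<bar> \<le> e/2"
    using assms(1,2) half_gt_zero[OF assms(3)] unfolding AW_conv_def by blast
  then show ?thesis by eventually_elim (use assms(3) in force)
qed

lemma AW_conv_le_liminf:
  assumes AW: "AW_conv fs f" and "lsc_fun f" "epi f \<noteq> {}"
  shows "f t \<le> liminf (\<lambda>n. fs n t)"
  unfolding le_Liminf_iff
proof (intro allI impI)
  fix y assume "y < f t"
  then obtain z w where zw: "y < ereal z" "ereal z < ereal w" "ereal w < f t"
    by (metis ereal_dense2)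
  obtain d where d: "d > 0" "\<And>s. \<bar>s - t\<bar> < d \<Longrightarrow> ereal w < f s"
    using lsc_fun_ball[OF assms(2) zw(3)] by blast
  have "bounded {(t, z)}" "min d (w - z) > 0" using d zw by simp_all
  from AW_conv_eventually_less[OF AW this] have "\<forall>\<^sub>F n in sequentially.
      \<bar>box_setdist (t, z) (epi (fs n)) - box_setdist (t, z) (epi f)\<bar> < min d (w - z)"
    by simp
  then show "\<forall>\<^sub>F n in sequentially. y < fs n t"
  proof eventually_elim
    case (elim n)
    show "y < fs n t"
    proof (rule ccontr)
      assume "\<not> y < fs n t"
      then have "(t, z) \<in> epi (fs n)" using zw(1) by (simp add: not_less order_trans)
      then obtain p where p: "p \<in> epi f" "box_dist (t, z) p < min d (w - z)"
        using box_setdist_diff_less_imp_near[OF _ assms(3) elim] by blast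
      obtain s b where "p = (s, b)" by (cases p)
      with p have "\<bar>s - t\<bar> < d" "b < w" "f s \<le> ereal b"
        by (auto simp: box_dist_def abs_less_iff)
      then have "ereal w < ereal b" using d(2) by (blast intro: less_le_trans)
      then show False using \<open>b < w\<close> by simp
    qed
  qed
qed

lemma AW_conv_approx_epi:
  assumes AW: "AW_conv fs f" and "\<And>n. epi (fs n) \<noteq> {}" "(t, b) \<in> epi f" "e > 0"
  shows "\<forall>\<^sub>F n in sequentially. \<exists>\<theta>. \<bar>\<theta> - t\<bar> < e \<and> fs n \<theta> < ereal (b + e)"
proof -
  have "bounded {(t, b)}" by simp
  from AW_conv_eventually_less[OF AW this assms(4)] have "\<forall>\<^sub>F n in sequentially.
      \<bar>box_setdist (t, b) (epi f) - box_setdist (t, b) (epi (fs n))\<bar> < e"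
    by (simp add: abs_minus_commute)
  then show ?thesis
  proof eventually_elim
    case (elim n)
    then obtain q where q: "q \<in> epi (fs n)" "box_dist (t, b) q < e"
      using box_setdist_diff_less_imp_near[OF assms(3) assms(2)] by blast
    obtain \<theta> c where "q = (\<theta>, c)" by (cases q)
    with q have "\<bar>\<theta> - t\<bar> < e" "fs n \<theta> \<le> ereal c" "c < b + e"
      by (auto simp: box_dist_def abs_less_iff)
    then show ?case by (intro exI[of _ \<theta>]) (auto intro: le_less_trans)
  qed
qed

section \<open>Convexity\<close>

lemma convex_fun_less_top:
  assumes "convex_fun f" "f x < \<infinity>" "f y < \<infinity>" "0 \<le> l" "l \<le> 1"
  shows "f (l * x + (1 - l) * y) < \<infinity>"
proof -
  have "\<exists>a. f z \<le> ereal a" if "f z < \<infinity>" for z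
    using that by (intro exI[of _ "real_of_ereal (f z)"]) (cases "f z"; simp)
  then obtain a b where ab: "f x \<le> ereal a" "f y \<le> ereal b"
    using assms(2,3) by blast
  have "f (l * x + (1 - l) * y) \<le> ereal l * f x + ereal (1 - l) * f y"
    using assms(1,4,5) unfolding convex_fun_def by blast
  also have "\<dots> \<le> ereal l * ereal a + ereal (1 - l) * ereal b"
    using assms(4,5) ab by (intro add_mono ereal_mult_left_mono) auto
  also have "\<dots> < \<infinity>" by simp
  finally show ?thesis .
qed

lemma convex_dom_f:
  assumes "convex_fun f"
  shows "convex (dom_f f)"
proof (rule convexI)
  fix x y u v :: real assume "x \<in> dom_f f" "y \<in> dom_f f" "0 \<le> u" "0 \<le> v" "u + v = 1"
  then have "f (u * x + (1 - u) * y) < \<infinity>"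
    by (intro convex_fun_less_top[OF assms]) (auto simp: dom_f_def)
  then show "u *\<^sub>R x + v *\<^sub>R y \<in> dom_f f"
    using \<open>u + v = 1\<close> by (simp add: dom_f_def eq_diff_eq[symmetric])
qed

lemma convex_on_if_convex_fun:
  assumes "convex_fun (\<lambda>x. ereal (F x))"
  shows "convex_on UNIV F"
proof (rule convex_onI)
  fix t x y :: real assume "0 < t" "t < 1"
  then have "ereal (F ((1 - t) * x + (1 - (1 - t)) * y)) \<le> ereal (1 - t) * ereal (F x) + ereal (1 - (1 - t)) * ereal (F y)"
    using assms[unfolded convex_fun_def, rule_format, of "1 - t" x y] by simp
  then show "F ((1 - t) *\<^sub>R x + t *\<^sub>R y) \<le> (1 - t) * F x + t * F y" by simp
qed auto

lemma convex_on_bound_near: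
  fixes F :: "real \<Rightarrow> real"
  assumes conv: "convex_on UNIV F" and nn: "\<And>x. 0 \<le> F x" and D: "D > 0"
    and "\<bar>\<theta>\<^sub>0 - t\<bar> \<le> \<eta>" "F \<theta>\<^sub>0 \<le> A"
    and "\<theta>\<^sub>1 \<le> t - D" "F \<theta>\<^sub>1 \<le> K" "t + D \<le> \<theta>\<^sub>2" "F \<theta>\<^sub>2 \<le> K"
  shows "F t \<le> A + \<eta> / D * K"
proof -
  have "0 \<le> K / D" using nn[of \<theta>\<^sub>2] assms(9) D by simp
  show ?thesis
  proof (cases "\<theta>\<^sub>0 \<le> t")
    case True
    have "D \<le> \<theta>\<^sub>2 - \<theta>\<^sub>0" using True assms by linarith
    have "F t \<le> (F \<theta>\<^sub>2 - F \<theta>\<^sub>0) / (\<theta>\<^sub>2 - \<theta>\<^sub>0) * (t - \<theta>\<^sub>0) + F \<theta>\<^sub>0"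
      using True assms by (intro convex_onD_Icc' convex_on_subset[OF conv]) auto
    also have "\<dots> \<le> K / D * \<eta> + A"
    proof (intro add_mono mult_mono)
      show "(F \<theta>\<^sub>2 - F \<theta>\<^sub>0) / (\<theta>\<^sub>2 - \<theta>\<^sub>0) \<le> K / D"
        using assms(3,9) \<open>D \<le> \<theta>\<^sub>2 - \<theta>\<^sub>0\<close> nn[of \<theta>\<^sub>0] nn[of \<theta>\<^sub>2] by (intro frac_le) linarith+
    qed (use assms True \<open>0 \<le> K / D\<close> in auto)
    finally show ?thesis by (simp add: ac_simps)
  next
    case False
    have "D \<le> \<theta>\<^sub>0 - \<theta>\<^sub>1" using False assms by linarith
    have "F t \<le> (F \<theta>\<^sub>1 - F \<theta>\<^sub>0) / (\<theta>\<^sub>0 - \<theta>\<^sub>1) * (\<theta>\<^sub>0 - t) + F \<theta>\<^sub>0"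
      using False assms by (intro convex_onD_Icc'' convex_on_subset[OF conv]) auto
    also have "\<dots> \<le> K / D * \<eta> + A"
    proof (intro add_mono mult_mono)
      show "(F \<theta>\<^sub>1 - F \<theta>\<^sub>0) / (\<theta>\<^sub>0 - \<theta>\<^sub>1) \<le> K / D"
        using assms(3,7) \<open>D \<le> \<theta>\<^sub>0 - \<theta>\<^sub>1\<close> nn[of \<theta>\<^sub>0] nn[of \<theta>\<^sub>1] by (intro frac_le) linarith+
    qed (use assms False \<open>0 \<le> K / D\<close> in auto)
    finally show ?thesis by (simp add: ac_simps)
  qed
qed

lemma convex_fun_tendsto_segment:
  assumes conv: "convex_fun g" and lsc: "lsc_fun g" and nn: "\<And>x. 0 \<le> g x" and gc: "g c < \<infinity>"
    and l: "l \<longlonglongrightarrow> 0" "\<And>k. 0 \<le> l k" "\<And>k. l k \<le> 1"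
  shows "(\<lambda>k. g (l k * c + (1 - l k) * \<theta>)) \<longlonglongrightarrow> g \<theta>"
proof (rule order_tendstoI)
  have "(\<lambda>k. l k * c + (1 - l k) * \<theta>) \<longlonglongrightarrow> 0 * c + (1 - 0) * \<theta>"
    by (intro tendsto_intros l)
  then show "\<forall>\<^sub>F k in sequentially. y < g (l k * c + (1 - l k) * \<theta>)" if "y < g \<theta>" for y
    using lsc_fun_tendsto[OF lsc _ that] by simp
next
  fix y assume y: "g \<theta> < y"
  obtain a where a: "g c = ereal a" using nn[of c] gc by (cases "g c") auto
  obtain b where b: "g \<theta> = ereal b" using nn[of \<theta>] y by (cases "g \<theta>") auto
  obtain z where z: "b < z" "ereal z < y" using ereal_dense2[OF y[unfolded b]] by auto
  have "(\<lambda>k. l k * a + (1 - l k) * b) \<longlonglongrightarrow> 0 * a + (1 - 0) * b" by (intro tendsto_intros l)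
  then have "\<forall>\<^sub>F k in sequentially. l k * a + (1 - l k) * b < z" using z by (simp add: order_tendstoD)
  then show "\<forall>\<^sub>F k in sequentially. g (l k * c + (1 - l k) * \<theta>) < y"
  proof eventually_elim
    case (elim k)
    have "g (l k * c + (1 - l k) * \<theta>) \<le> ereal (l k) * g c + ereal (1 - l k) * g \<theta>"
      using conv l(2,3) unfolding convex_fun_def by blast
    also have "\<dots> = ereal (l k * a + (1 - l k) * b)" using a b by simp
    also have "\<dots> < ereal z" using elim by simp
    finally show ?case using z(2) by simp
  qed
qed

lemma convex_real_interior_empty:
  fixes S :: "real set"
  assumes "convex S" "interior S = {}" "x \<in> S" "y \<in> S"
  shows "x = y"
proof (rule ccontr)
  assume "x \<noteq> y"
  define a b where "a = min x y" and "b = max x y"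
  have "a < b" "a \<in> S" "b \<in> S" using \<open>x \<noteq> y\<close> assms(3,4) by (auto simp: a_def b_def min_def max_def)
  then have "{a..b} \<subseteq> S"
    using assms(1) unfolding convex_contains_segment by (metis closed_segment_eq_real_ivl1 less_imp_le)
  then have "{a<..<b} \<subseteq> interior S"
    by (metis interior_atLeastAtMost_real interior_mono)
  moreover have "(a + b) / 2 \<in> {a<..<b}" using \<open>a < b\<close> by simp
  ultimately show False using assms(2) by blast
qed

section \<open>Pointwise convergence in the interior of the domain\<close>

lemma AW_conv_eventually_less_interior:
  fixes F :: "nat \<Rightarrow> real \<Rightarrow> real"
  assumes AW: "AW_conv (\<lambda>n \<theta>. ereal (F n \<theta>)) f"
    and conv: "\<And>n. convex_on UNIV (F n)" and nn: "\<And>n \<theta>. 0 \<le> F n \<theta>"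
    and t: "t \<in> interior (dom_f f)" and y: "f t < ereal y"
  shows "\<forall>\<^sub>F n in sequentially. F n t < y"
proof -
  txt \<open>Points of \<open>epi f\<close> over \<open>t\<close> and \<open>t \<plusminus> r\<close> are approximated by points of the
    epigraphs of the \<open>F n\<close>; convexity of \<open>F n\<close> then bounds \<open>F n t\<close>.\<close>
  obtain r where r: "r > 0" "cball t r \<subseteq> dom_f f" using t mem_interior_cball by blast
  then have "t - r \<in> dom_f f" "t + r \<in> dom_f f" by (auto simp: dist_real_def)
  then have "f (t - r) < \<infinity>" "f (t + r) < \<infinity>" by (simp_all add: dom_f_def)
  moreover have "\<exists>a. f s < ereal a" if "f s < \<infinity>" for s
    using that less_PInf_Ex_of_nat[of "f s"] by auto
  ultimately obtain a\<^sub>1 a\<^sub>2 where a12: "f (t - r) < ereal a\<^sub>1" "f (t + r) < ereal a\<^sub>2"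
    by blast
  obtain a where a: "f t < ereal a" "a < y" using ereal_dense2[OF y] by auto
  define K where "K = \<bar>a\<^sub>1\<bar> + \<bar>a\<^sub>2\<bar> + 1"
  have K: "0 < K" by (simp add: K_def add_nonneg_pos)
  define \<rho> where "\<rho> = 1 + 2*K/r"
  have "0 < \<rho>" using K r by (simp add: \<rho>_def add_pos_nonneg)
  define \<eta> where "\<eta> = min (r/2) (min 1 ((y - a) / (2 * \<rho>)))"
  have \<eta>: "0 < \<eta>" "\<eta> \<le> r/2" "\<eta> \<le> 1"
    using r a \<open>0 < \<rho>\<close> unfolding \<eta>_def by (simp, linarith, simp)
  have "\<eta> \<le> (y - a) / (2 * \<rho>)" by (simp add: \<eta>_def)
  then have "\<eta> * \<rho> < y - a" using \<open>0 < \<rho>\<close> a(2) by (simp add: pos_le_divide_eq)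
  have ne: "epi (\<lambda>\<theta>. ereal (F n \<theta>)) \<noteq> {}" for n by (rule epi_nonempty[of _ 0]) simp
  have approx: "\<forall>\<^sub>F n in sequentially. \<exists>\<theta>. \<bar>\<theta> - s\<bar> < \<eta> \<and> F n \<theta> < b + \<eta>"
    if "f s < ereal b" for s b
    using AW_conv_approx_epi[OF AW ne _ \<eta>(1), of s b] that by simp
  from approx[OF a(1)] approx[OF a12(1)] approx[OF a12(2)]
  show ?thesis
  proof eventually_elim
    case (elim n)
    then obtain \<theta>\<^sub>0 \<theta>\<^sub>1 \<theta>\<^sub>2 where
      "\<bar>\<theta>\<^sub>0 - t\<bar> < \<eta>" "F n \<theta>\<^sub>0 < a + \<eta>" "\<bar>\<theta>\<^sub>1 - (t - r)\<bar> < \<eta>" "F n \<theta>\<^sub>1 < a\<^sub>1 + \<eta>"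
      "\<bar>\<theta>\<^sub>2 - (t + r)\<bar> < \<eta>" "F n \<theta>\<^sub>2 < a\<^sub>2 + \<eta>"
      by blast
    with \<eta> have "F n t \<le> (a + \<eta>) + \<eta> / (r/2) * K"
      by (intro convex_on_bound_near[OF conv nn, where D="r/2" and \<theta>\<^sub>0=\<theta>\<^sub>0 and \<theta>\<^sub>1=\<theta>\<^sub>1 and \<theta>\<^sub>2=\<theta>\<^sub>2 and K=K]) (auto simp: K_def abs_less_iff r)
    also have "\<dots> = a + \<eta> * \<rho>" using r by (simp add: \<rho>_def field_simps)
    finally show ?case using \<open>\<eta> * \<rho> < y - a\<close> a(2) by linarith
  qed
qed

lemma AW_conv_tendsto_interior:
  fixes F :: "nat \<Rightarrow> real \<Rightarrow> real"
  assumes AW: "AW_conv (\<lambda>n \<theta>. ereal (F n \<theta>)) f"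
    and conv: "\<And>n. convex_on UNIV (F n)" and nn: "\<And>n \<theta>. 0 \<le> F n \<theta>"
    and lsc: "lsc_fun f" and t: "t \<in> interior (dom_f f)"
  shows "(\<lambda>n. ereal (F n t)) \<longlonglongrightarrow> f t"
proof (rule order_tendstoI)
  have "f t < \<infinity>" using t interior_subset[of "dom_f f"] by (auto simp: dom_f_def)
  then have "epi f \<noteq> {}" by (rule epi_nonempty)
  then show "\<forall>\<^sub>F n in sequentially. y < ereal (F n t)" if "y < f t" for y
    using AW_conv_le_liminf[OF AW lsc, of t] that by (auto intro: less_LiminfD less_le_trans)
next
  fix y assume "f t < y"
  then show "\<forall>\<^sub>F n in sequentially. ereal (F n t) < y"
    using AW_conv_eventually_less_interior[OF AW conv nn t] by (cases y) auto
qed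

section \<open>Moment generating functions\<close>

lemma nn_integral_exp_less_top_compact:
  assumes "prob_space M" "compact K" "K \<in> sets M" "measure M K = 1"
  shows "(\<integral>\<^sup>+x. ennreal (exp (\<theta> * x)) \<partial>M) < \<infinity>"
proof -
  interpret prob_space M by fact
  obtain R where R: "\<forall>x\<in>K. \<bar>x\<bar> \<le> R" using compact_imp_bounded[OF assms(2)] bounded_real by auto
  have "AE x in M. x \<in> K" using AE_prob_1 assms(3,4) by auto
  then have "AE x in M. ennreal (exp (\<theta> * x)) \<le> ennreal (exp (\<bar>\<theta>\<bar> * R))"
  proof eventually_elim
    case (elim x)
    have "\<theta> * x \<le> \<bar>\<theta>\<bar> * \<bar>x\<bar>" by (metis abs_ge_self abs_mult)
    also have "\<dots> \<le> \<bar>\<theta>\<bar> * R" using R elim by (simp add: mult_left_mono)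
    finally show ?case by simp
  qed
  then have "(\<integral>\<^sup>+x. ennreal (exp (\<theta> * x)) \<partial>M) \<le> (\<integral>\<^sup>+x. ennreal (exp (\<bar>\<theta>\<bar> * R)) \<partial>M)"
    by (rule nn_integral_mono_AE)
  also have "\<dots> < \<infinity>" by (simp add: emeasure_space_1)
  finally show ?thesis .
qed

lemma nn_integral_exp_pos:
  assumes "prob_space M" "sets M = sets borel"
  shows "0 < (\<integral>\<^sup>+x. ennreal (exp (\<theta> * x)) \<partial>M)"
proof (rule ccontr)
  interpret prob_space M by fact
  assume "\<not> ?thesis"
  then have "(\<integral>\<^sup>+x. ennreal (exp (\<theta> * x)) \<partial>M) = 0" by (simp add: not_less)
  then have "AE x in M. ennreal (exp (\<theta> * x)) = 0"
    by (subst (asm) nn_integral_0_iff_AE) (auto simp: measurable_cong_sets[OF assms(2) refl])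
  then show False by simp
qed

lemma mgf_zero_eq_1_iff: "mgf M 0 = 1 \<longleftrightarrow> prob_space M"
proof -
  have "mgf M 0 = 1 \<longleftrightarrow> emeasure M (space M) = 1"
    by (simp add: mgf_def one_ennreal.rep_eq[symmetric] enn2ereal_inject)
  then show ?thesis using prob_spaceI prob_space.emeasure_space_1 by blast
qed

lemma convex_fun_mgf:
  assumes "sets P = sets borel"
  shows "convex_fun (mgf P)"
  unfolding convex_fun_def
proof (intro allI impI)
  fix x y l :: real assume l: "0 \<le> l \<and> l \<le> 1"
  have mb: "borel_measurable P = borel_measurable borel" by (rule measurable_cong_sets[OF assms refl])
  have "(\<integral>\<^sup>+t. ennreal (exp ((l * x + (1 - l) * y) * t)) \<partial>P)
      \<le> (\<integral>\<^sup>+t. ennreal l * ennreal (exp (x * t)) + ennreal (1 - l) * ennreal (exp (y * t)) \<partial>P)"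
  proof (intro nn_integral_mono)
    fix t
    have "exp ((l * x + (1 - l) * y) * t) \<le> l * exp (x * t) + (1 - l) * exp (y * t)"
      using convex_onD[OF exp_convex, of l "y*t" "x*t"] l by (simp add: algebra_simps)
    then have "ennreal (exp ((l * x + (1 - l) * y) * t)) \<le> ennreal (l * exp (x * t) + (1 - l) * exp (y * t))"
      by (rule ennreal_leI)
    also have "\<dots> = ennreal l * ennreal (exp (x * t)) + ennreal (1 - l) * ennreal (exp (y * t))"
      using l by (simp add: ennreal_plus ennreal_mult)
    finally show "ennreal (exp ((l * x + (1 - l) * y) * t)) \<le> \<dots>" .
  qed
  also have "\<dots> = ennreal l * (\<integral>\<^sup>+t. ennreal (exp (x * t)) \<partial>P) + ennreal (1 - l) * (\<integral>\<^sup>+t. ennreal (exp (y * t)) \<partial>P)"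
    by (subst nn_integral_add) (auto simp: mb nn_integral_cmult)
  finally show "mgf P (l * x + (1 - l) * y) \<le> ereal l * mgf P x + ereal (1 - l) * mgf P y"
    using l by (simp add: mgf_def less_eq_ennreal.rep_eq plus_ennreal.rep_eq times_ennreal.rep_eq enn2ereal_ennreal)
qed

text \<open>Fatou's lemma along sequences \<open>p k \<rightarrow> \<theta>\<close>.\<close>
lemma mgf_eventually_greater:
  assumes "sets P = sets borel" "p \<longlonglongrightarrow> \<theta>" "ennreal r < (\<integral>\<^sup>+x. ennreal (exp (\<theta> * x)) \<partial>P)"
  shows "\<forall>\<^sub>F k in sequentially. ennreal r < (\<integral>\<^sup>+x. ennreal (exp (p k * x)) \<partial>P)"
proof -
  have "liminf (\<lambda>k. ennreal (exp (p k * x))) = ennreal (exp (\<theta> * x))" for x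
    by (intro lim_imp_Liminf trivial_limit_sequentially tendsto_ennrealI tendsto_intros assms(2))
  then have "(\<integral>\<^sup>+x. ennreal (exp (\<theta> * x)) \<partial>P) \<le> liminf (\<lambda>k. (\<integral>\<^sup>+x. ennreal (exp (p k * x)) \<partial>P))"
    using nn_integral_liminf[of "\<lambda>k x. ennreal (exp (p k * x))" P] by (simp add: measurable_cong_sets[OF assms(1) refl])
  with assms(3) show ?thesis by (intro less_LiminfD) (rule less_le_trans)
qed

lemma lsc_fun_mgf:
  assumes "sets P = sets borel"
  shows "lsc_fun (mgf P)"
  unfolding lsc_fun_iff
proof (intro allI impI)
  fix \<theta> and y :: ereal assume y: "y < mgf P \<theta>"
  show "\<forall>\<^sub>F t in at \<theta>. y < mgf P t"
  proof (cases "y < 0")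
    case True
    then show ?thesis by (intro always_eventually allI) (simp add: mgf_def less_le_trans[OF True])
  next
    case False
    then obtain r where r: "y = ereal r" "0 \<le> r" using y by (cases y) auto
    have "\<forall>\<^sub>F k in sequentially. y < mgf P (p k)" if "p \<longlonglongrightarrow> \<theta>" for p
      using mgf_eventually_greater[OF assms that, of r] y r
      by (simp add: mgf_def less_ennreal.rep_eq enn2ereal_ennreal)
    then show ?thesis by (intro sequentially_imp_eventually_at) blast
  qed
qed

lemma nn_integral_exp_density_exp:
  assumes "sets M = sets borel" "0 \<le> a"
  shows "(\<integral>\<^sup>+x. ennreal (exp (\<theta> * x)) \<partial>density M (\<lambda>x. ennreal (a * exp (c * x))))
    = ennreal a * (\<integral>\<^sup>+x. ennreal (exp ((\<theta> + c) * x)) \<partial>M)"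
proof -
  have mb: "borel_measurable M = borel_measurable borel" by (rule measurable_cong_sets[OF assms(1) refl])
  have "(\<integral>\<^sup>+x. ennreal (exp (\<theta> * x)) \<partial>density M (\<lambda>x. ennreal (a * exp (c * x))))
      = (\<integral>\<^sup>+x. ennreal (a * exp (c * x)) * ennreal (exp (\<theta> * x)) \<partial>M)"
    by (rule nn_integral_density) (auto simp: mb)
  also have "\<dots> = (\<integral>\<^sup>+x. ennreal a * ennreal (exp ((\<theta> + c) * x)) \<partial>M)"
    using assms(2) by (intro nn_integral_cong) (simp add: ennreal_mult'[symmetric] exp_add[symmetric] algebra_simps)
  also have "\<dots> = ennreal a * (\<integral>\<^sup>+x. ennreal (exp ((\<theta> + c) * x)) \<partial>M)"
    by (rule nn_integral_cmult) (simp add: mb)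
  finally show ?thesis .
qed

section \<open>Weak limits\<close>

lemma real_distribution_borel_measurable_eq:
  "real_distribution P \<Longrightarrow> borel_measurable P = borel_measurable borel"
  by (rule measurable_cong_sets) (auto simp: real_distribution_def real_distribution_axioms_def)

lemma nn_integral_min_exp:
  assumes "real_distribution P"
  shows "(\<integral>\<^sup>+x. ennreal (min (exp (s * x)) (exp T)) \<partial>P) = ennreal (\<integral>x. min (exp (s * x)) (exp T) \<partial>P)"
proof -
  interpret real_distribution P by fact
  have "integrable P (\<lambda>x. min (exp (s * x)) (exp T))"
    by (rule integrable_const_bound[where B="exp T"]) (auto simp: real_distribution_borel_measurable_eq[OF assms])
  then show ?thesis by (rule nn_integral_eq_integral) simp
qed

lemma weak_conv_integral_min_exp:
  assumes "\<And>k. real_distribution (\<mu> k)" "real_distribution M" "weak_conv_m \<mu> M"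
  shows "(\<lambda>k. \<integral>x. min (exp (s * x)) (exp T) \<partial>\<mu> k) \<longlonglongrightarrow> (\<integral>x. min (exp (s * x)) (exp T) \<partial>M)"
  by (rule weak_conv_imp_integral_bdd_continuous_conv[OF assms, where B="exp T"])
     (auto intro!: continuous_intros)

lemma SUP_min_exp_nat:
  fixes a :: real assumes "0 \<le> a"
  shows "(SUP n. ennreal (min a (exp (real n)))) = ennreal a"
proof (rule antisym)
  show "(SUP n. ennreal (min a (exp (real n)))) \<le> ennreal a" by (rule SUP_least, rule ennreal_leI) simp
  have "a \<le> real (nat \<lceil>a\<rceil>)" by linarith
  also have "\<dots> \<le> exp (real (nat \<lceil>a\<rceil>))" using exp_ge_add_one_self[of "real (nat \<lceil>a\<rceil>)"] by linarith
  finally have "ennreal a = ennreal (min a (exp (real (nat \<lceil>a\<rceil>))))" by simp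
  then show "ennreal a \<le> (SUP n. ennreal (min a (exp (real n))))"
    by (metis UNIV_I SUP_upper)
qed

text \<open>Truncating \<open>exp (s x)\<close> at \<open>exp T\<close> gives bounded continuous test functions, and the
  truncated integrals increase to the full one (monotone convergence).\<close>
lemma weak_conv_nn_integral_exp_le:
  assumes \<mu>: "\<And>k. real_distribution (\<mu> k)" and M: "real_distribution M" and wc: "weak_conv_m \<mu> M"
    and G: "\<And>k. (\<integral>\<^sup>+x. ennreal (exp (s * x)) \<partial>\<mu> k) = ennreal (G k)"
    and lim: "G \<longlonglongrightarrow> L" and Gnn: "\<And>k. 0 \<le> G k"
  shows "(\<integral>\<^sup>+x. ennreal (exp (s * x)) \<partial>M) \<le> ennreal L"
proof -
  have trunc: "(\<integral>x. min (exp (s * x)) (exp T) \<partial>M) \<le> L" for T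
  proof (rule LIMSEQ_le[OF weak_conv_integral_min_exp[OF \<mu> M wc] lim], intro exI allI impI)
    fix n
    have "ennreal (\<integral>x. min (exp (s * x)) (exp T) \<partial>\<mu> n) = (\<integral>\<^sup>+x. ennreal (min (exp (s * x)) (exp T)) \<partial>\<mu> n)"
      by (rule nn_integral_min_exp[OF \<mu>, symmetric])
    also have "\<dots> \<le> (\<integral>\<^sup>+x. ennreal (exp (s * x)) \<partial>\<mu> n)" by (intro nn_integral_mono) simp
    finally show "(\<integral>x. min (exp (s * x)) (exp T) \<partial>\<mu> n) \<le> G n"
      using Gnn[of n] by (simp add: G)
  qed
  have inc: "incseq (\<lambda>n x. ennreal (min (exp (s * x)) (exp (real n))))"
    by (auto simp: incseq_def le_fun_def intro!: ennreal_leI)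
      (meson min.cobounded2 exp_le_cancel_iff of_nat_le_iff order_trans)
  have "(\<integral>\<^sup>+x. ennreal (exp (s * x)) \<partial>M) = (\<integral>\<^sup>+x. (SUP n. ennreal (min (exp (s * x)) (exp (real n)))) \<partial>M)"
    by (simp add: SUP_min_exp_nat)
  also have "\<dots> = (SUP n. \<integral>\<^sup>+x. ennreal (min (exp (s * x)) (exp (real n))) \<partial>M)"
    by (rule nn_integral_monotone_convergence_SUP[OF inc])
      (simp add: real_distribution_borel_measurable_eq[OF M])
  also have "\<dots> \<le> ennreal L"
    unfolding nn_integral_min_exp[OF M] using trunc by (intro SUP_least ennreal_leI)
  finally show ?thesis .
qed

lemma exp_le_min_plus_tail:
  fixes s x T \<kappa> :: real
  assumes "\<kappa> > 0"
  shows "exp (s * x) \<le> min (exp (s * x)) (exp T) + exp (- \<kappa> * T) * exp ((s * (1 + \<kappa>)) * x)"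
proof (cases "s * x \<le> T")
  case True
  then show ?thesis by (simp add: min_def add_nonneg_nonneg)
next
  case False
  have "exp (- \<kappa> * T) * exp ((s * (1 + \<kappa>)) * x) = exp (s * x) * exp (\<kappa> * (s * x - T))"
    by (simp add: exp_add[symmetric] algebra_simps)
  moreover have "1 \<le> exp (\<kappa> * (s * x - T))" using False assms by simp
  ultimately have "exp (s * x) \<le> exp (- \<kappa> * T) * exp ((s * (1 + \<kappa>)) * x)" by simp
  then show ?thesis by (simp add: add_increasing)
qed

text \<open>The reverse inequality needs uniform integrability, which the convergent moment at
  \<open>s (1 + \<kappa>)\<close> provides: the mass above the truncation level \<open>T\<close> is at most \<open>exp (-\<kappa> T) G' k\<close>.\<close>
lemma weak_conv_nn_integral_exp_ge:
  assumes \<mu>: "\<And>k. real_distribution (\<mu> k)" and M: "real_distribution M" and wc: "weak_conv_m \<mu> M"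
    and G: "\<And>k. (\<integral>\<^sup>+x. ennreal (exp (s * x)) \<partial>\<mu> k) = ennreal (G k)"
    and G': "\<And>k. (\<integral>\<^sup>+x. ennreal (exp ((s * (1 + \<kappa>)) * x)) \<partial>\<mu> k) = ennreal (G' k)"
    and lim: "G \<longlonglongrightarrow> L" and lim': "G' \<longlonglongrightarrow> L'" and G'nn: "\<And>k. 0 \<le> G' k"
    and \<kappa>: "\<kappa> > 0"
    and X: "(\<integral>\<^sup>+x. ennreal (exp (s * x)) \<partial>M) = ennreal X" "0 \<le> X"
  shows "L \<le> X"
proof -
  have bound: "L \<le> X + exp (- \<kappa> * T) * L'" for T
  proof -
    define g where "g x = min (exp (s * x)) (exp T)" for x
    have "(\<lambda>k. (\<integral>x. g x \<partial>\<mu> k) + exp (- \<kappa> * T) * G' k) \<longlonglongrightarrow> (\<integral>x. g x \<partial>M) + exp (- \<kappa> * T) * L'"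
      unfolding g_def by (intro tendsto_intros weak_conv_integral_min_exp[OF \<mu> M wc] lim')
    then have "L \<le> (\<integral>x. g x \<partial>M) + exp (- \<kappa> * T) * L'"
    proof (rule LIMSEQ_le[OF lim], intro exI allI impI)
      fix n
      have mb: "borel_measurable (\<mu> n) = borel_measurable borel"
        by (rule real_distribution_borel_measurable_eq[OF \<mu>])
      have "0 \<le> (\<integral>x. g x \<partial>\<mu> n)" unfolding g_def by (rule integral_nonneg_AE) simp
      have "ennreal (G n) \<le> (\<integral>\<^sup>+x. ennreal (g x + exp (- \<kappa> * T) * exp ((s * (1 + \<kappa>)) * x)) \<partial>\<mu> n)"
        unfolding G[symmetric] g_def by (intro nn_integral_mono ennreal_leI exp_le_min_plus_tail[OF \<kappa>])
      also have "\<dots> = (\<integral>\<^sup>+x. ennreal (g x) + ennreal (exp (- \<kappa> * T)) * ennreal (exp ((s * (1 + \<kappa>)) * x)) \<partial>\<mu> n)"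
        by (intro nn_integral_cong) (simp add: g_def ennreal_plus ennreal_mult')
      also have "\<dots> = (\<integral>\<^sup>+x. ennreal (g x) \<partial>\<mu> n)
          + ennreal (exp (- \<kappa> * T)) * (\<integral>\<^sup>+x. ennreal (exp ((s * (1 + \<kappa>)) * x)) \<partial>\<mu> n)"
        by (subst nn_integral_add) (auto simp: mb g_def nn_integral_cmult)
      also have "\<dots> = ennreal ((\<integral>x. g x \<partial>\<mu> n) + exp (- \<kappa> * T) * G' n)"
        unfolding g_def nn_integral_min_exp[OF \<mu>] G' using G'nn[of n]
        by (simp add: ennreal_mult'[symmetric] ennreal_plus[symmetric] integral_nonneg_AE del: ennreal_plus)
      finally show "G n \<le> (\<integral>x. g x \<partial>\<mu> n) + exp (- \<kappa> * T) * G' n"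
        using G'nn[of n] \<open>0 \<le> (\<integral>x. g x \<partial>\<mu> n)\<close> by (subst (asm) ennreal_le_iff) auto
    qed
    moreover have "ennreal (\<integral>x. g x \<partial>M) \<le> ennreal X"
      unfolding g_def nn_integral_min_exp[OF M, symmetric] X(1)[symmetric] by (intro nn_integral_mono) simp
    ultimately show ?thesis using X(2) by (simp add: ennreal_le_iff)
  qed
  have "(\<lambda>n. exp (- \<kappa>) ^ n) \<longlonglongrightarrow> 0" using \<kappa> by (intro LIMSEQ_power_zero) simp
  then have "(\<lambda>n. X + exp (- \<kappa> * real n) * L') \<longlonglongrightarrow> X + 0 * L'"
    by (intro tendsto_intros) (simp add: exp_of_nat_mult[symmetric] mult.commute)
  then show ?thesis using bound by (intro LIMSEQ_le_const[where X="\<lambda>n. X + exp (- \<kappa> * real n) * L'"]) auto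
qed

lemma emeasure_outside_interval_le:
  assumes Q: "real_distribution Q" and h: "h > 0"
    and A: "(\<integral>\<^sup>+x. ennreal (exp (h * x)) \<partial>Q) \<le> ennreal A"
    and B: "(\<integral>\<^sup>+x. ennreal (exp ((- h) * x)) \<partial>Q) \<le> ennreal B" and AB: "0 \<le> A" "0 \<le> B"
  shows "emeasure Q (UNIV - {- R<..R}) \<le> ennreal ((A + B) / exp (h * R))"
proof -
  define e where "e = exp (h * R)"
  have e: "e > 0" by (simp add: e_def)
  have ind: "indicator (UNIV - {- R<..R}) x \<le> ennreal (exp (h * x) / e + exp ((- h) * x) / e)" for x :: real
  proof (cases "x \<in> {- R<..R}")
    case False
    then have "R \<le> x \<or> R \<le> - x" by auto
    then have "h * R \<le> h * x \<or> h * R \<le> (- h) * x"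
      using h by (metis mult_left_mono mult_minus_left mult_minus_right less_imp_le)
    then have "e \<le> exp (h * x) \<or> e \<le> exp ((- h) * x)" by (auto simp: e_def)
    then have "1 \<le> exp (h * x) / e + exp ((- h) * x) / e"
      using e by (auto simp: add_increasing add_increasing2)
    then show ?thesis using False by simp
  qed simp
  have "emeasure Q (UNIV - {- R<..R}) = (\<integral>\<^sup>+x. indicator (UNIV - {- R<..R}) x \<partial>Q)"
    using Q by (simp add: real_distribution_def real_distribution_axioms_def)
  also have "\<dots> \<le> (\<integral>\<^sup>+x. ennreal (1/e) * ennreal (exp (h * x)) + ennreal (1/e) * ennreal (exp ((- h) * x)) \<partial>Q)"
    using e by (intro nn_integral_mono order.trans[OF ind]) (simp add: ennreal_plus ennreal_mult'[symmetric])
  also have "\<dots> = ennreal (1/e) * (\<integral>\<^sup>+x. ennreal (exp (h * x)) \<partial>Q) + ennreal (1/e) * (\<integral>\<^sup>+x. ennreal (exp ((- h) * x)) \<partial>Q)"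
    by (subst nn_integral_add) (auto simp: real_distribution_borel_measurable_eq[OF Q] nn_integral_cmult)
  also have "\<dots> \<le> ennreal (1/e) * ennreal A + ennreal (1/e) * ennreal B"
    by (intro add_mono mult_left_mono A B) auto
  also have "\<dots> = ennreal ((A + B) / e)"
    using e AB by (simp add: ennreal_plus[symmetric] ennreal_mult'[symmetric] add_divide_distrib del: ennreal_plus)
  finally show ?thesis by (simp add: e_def)
qed

lemma tight_if_exp_moments_bounded:
  assumes Q: "\<And>n. real_distribution (Q n)" and h: "h > 0"
    and A: "\<And>n. (\<integral>\<^sup>+x. ennreal (exp (h * x)) \<partial>Q n) \<le> ennreal A"
    and B: "\<And>n. (\<integral>\<^sup>+x. ennreal (exp ((- h) * x)) \<partial>Q n) \<le> ennreal B" and AB: "0 \<le> A" "0 \<le> B"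
  shows "tight Q"
  unfolding tight_def
proof (intro conjI allI impI Q)
  fix \<epsilon> :: real assume \<epsilon>: "\<epsilon> > 0"
  define R where "R = ln ((A + B) / \<epsilon> + 2) / h"
  have q: "0 \<le> (A + B) / \<epsilon>" using AB \<epsilon> by simp
  have "exp (h * R) = (A + B) / \<epsilon> + 2" unfolding R_def using h q by simp
  then have small: "(A + B) / exp (h * R) < \<epsilon>"
    using \<epsilon> AB q by (simp add: divide_less_eq field_simps)
  show "\<exists>a b. a < b \<and> (\<forall>n. 1 - \<epsilon> < measure (Q n) {a<..b})"
  proof (intro exI conjI allI)
    show "- R < R" unfolding R_def using h q by (simp add: ln_gt_zero)
    fix n
    interpret real_distribution "Q n" by fact
    have "measure (Q n) (UNIV - {- R<..R}) \<le> (A + B) / exp (h * R)"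
      using emeasure_outside_interval_le[OF Q h A B AB, of n R] AB
      unfolding measure_def by (intro enn2real_leI) auto
    moreover have "measure (Q n) (UNIV - {- R<..R}) = 1 - measure (Q n) {- R<..R}"
      using prob_compl[of "{- R<..R}"] by (simp add: space_eq_univ)
    ultimately show "1 - \<epsilon> < measure (Q n) {- R<..R}" using small by linarith
  qed
qed

lemma weak_limit_of_convergent_mgfs:
  fixes \<mu> :: "nat \<Rightarrow> real measure"
  assumes \<mu>: "\<And>n. real_distribution (\<mu> n)"
    and G: "\<And>n s. (\<integral>\<^sup>+x. ennreal (exp (s * x)) \<partial>\<mu> n) = ennreal (G n s)" and Gnn: "\<And>n s. 0 \<le> G n s"
    and V: "open V" "0 \<in> V" and lim: "\<And>s. s \<in> V \<Longrightarrow> (\<lambda>n. G n s) \<longlonglongrightarrow> \<Psi> s"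
  shows "\<exists>M. real_distribution M \<and> (\<forall>s\<in>V. (\<integral>\<^sup>+x. ennreal (exp (s * x)) \<partial>M) = ennreal (\<Psi> s))"
proof -
  obtain r where r: "r > 0" "cball 0 r \<subseteq> V" using V open_contains_cball by blast
  then have "r \<in> V" "- r \<in> V" by auto
  obtain A B where A: "\<And>n. norm (G n r) \<le> A" and B: "\<And>n. norm (G n (- r)) \<le> B"
    using convergent_imp_Bseq[OF convergentI[OF lim[OF \<open>r \<in> V\<close>]]]
      convergent_imp_Bseq[OF convergentI[OF lim[OF \<open>- r \<in> V\<close>]]] unfolding Bseq_def by metis
  have "tight \<mu>"
  proof (rule tight_if_exp_moments_bounded[OF \<mu> r(1)])
    show "(\<integral>\<^sup>+x. ennreal (exp (r * x)) \<partial>\<mu> n) \<le> ennreal A" for n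
      unfolding G using A[of n] by (intro ennreal_leI) simp
    show "(\<integral>\<^sup>+x. ennreal (exp ((- r) * x)) \<partial>\<mu> n) \<le> ennreal B" for n
      unfolding G using B[of n] by (intro ennreal_leI) simp
    show "0 \<le> A" "0 \<le> B" using A[of 0] B[of 0] by (simp_all add: order.trans[OF norm_ge_zero])
  qed
  then obtain \<sigma> M where \<sigma>: "strict_mono \<sigma>" and M: "real_distribution M" and "weak_conv_m (\<mu> \<circ> id \<circ> \<sigma>) M"
    using tight_imp_convergent_subsubsequence[OF _ strict_mono_id] by blast
  then have wc: "weak_conv_m (\<lambda>k. \<mu> (\<sigma> k)) M" by (simp add: comp_def)
  have lim\<sigma>: "(\<lambda>k. G (\<sigma> k) u) \<longlonglongrightarrow> \<Psi> u" if "u \<in> V" for u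
    using LIMSEQ_subseq_LIMSEQ[OF lim[OF that] \<sigma>] by (simp add: comp_def)
  show ?thesis
  proof (intro exI conjI ballI)
    show "real_distribution M" by (rule M)
    fix s assume "s \<in> V"
    obtain \<rho> where \<rho>: "\<rho> > 0" "cball s \<rho> \<subseteq> V" using V \<open>s \<in> V\<close> open_contains_cball by blast
    define \<kappa> where "\<kappa> = \<rho> / (\<bar>s\<bar> + 1)"
    have \<kappa>: "\<kappa> > 0" using \<rho> by (simp add: \<kappa>_def)
    have "\<bar>s\<bar> * \<kappa> \<le> \<rho>" using \<rho> by (simp add: \<kappa>_def field_simps)
    then have "s * (1 + \<kappa>) \<in> V" using \<rho>(2) \<kappa> by (auto simp: dist_real_def algebra_simps abs_mult)
    have le: "(\<integral>\<^sup>+x. ennreal (exp (s * x)) \<partial>M) \<le> ennreal (\<Psi> s)"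
      by (rule weak_conv_nn_integral_exp_le[OF \<mu> M wc G lim\<sigma>[OF \<open>s \<in> V\<close>] Gnn])
    define X where "X = enn2real (\<integral>\<^sup>+x. ennreal (exp (s * x)) \<partial>M)"
    have X: "(\<integral>\<^sup>+x. ennreal (exp (s * x)) \<partial>M) = ennreal X"
      unfolding X_def by (intro ennreal_enn2real[symmetric] le_less_trans[OF le ennreal_less_top])
    have "\<Psi> s \<le> X"
      by (rule weak_conv_nn_integral_exp_ge[OF \<mu> M wc G G lim\<sigma>[OF \<open>s \<in> V\<close>] lim\<sigma>[OF \<open>s * (1 + \<kappa>) \<in> V\<close>] Gnn \<kappa> X])
        (simp add: X_def)
    then show "(\<integral>\<^sup>+x. ennreal (exp (s * x)) \<partial>M) = ennreal (\<Psi> s)"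
      using le X by (simp add: antisym ennreal_leI)
  qed
qed

text \<open>The exponential tilt \<open>exp (c x) \<nu>\<^sub>n / F\<^sub>n c\<close> moves \<open>c\<close> to the origin, where
  the tilted moment generating functions converge on a neighbourhood of \<open>0\<close>; the weak limit
  is then tilted back.\<close>
lemma measure_with_limit_mgf:
  assumes \<nu>: "\<And>n. prob_space (\<nu> n)" "\<And>n. sets (\<nu> n) = sets borel"
    and F: "\<And>n \<theta>. (\<integral>\<^sup>+x. ennreal (exp (\<theta> * x)) \<partial>\<nu> n) = ennreal (F n \<theta>)" and Fpos: "\<And>n \<theta>. 0 < F n \<theta>"
    and U: "open U" "c \<in> U" and \<Phi>c: "0 < \<Phi> c"
    and lim: "\<And>t. t \<in> U \<Longrightarrow> (\<lambda>n. F n t) \<longlonglongrightarrow> \<Phi> t"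
  shows "\<exists>\<nu>\<^sub>0. sets \<nu>\<^sub>0 = sets borel \<and> (\<forall>t\<in>U. mgf \<nu>\<^sub>0 t = ereal (\<Phi> t))"
proof -
  define \<mu> where "\<mu> n = density (\<nu> n) (\<lambda>x. ennreal (1 / F n c * exp (c * x)))" for n
  have \<mu>G: "(\<integral>\<^sup>+x. ennreal (exp (s * x)) \<partial>\<mu> n) = ennreal (F n (s + c) / F n c)" for n s
    unfolding \<mu>_def using Fpos[of n c] Fpos[of n "s + c"]
    by (subst nn_integral_exp_density_exp[OF \<nu>(2)]) (simp_all add: F ennreal_mult'[symmetric])
  have \<mu>: "real_distribution (\<mu> n)" for n
  proof -
    have "prob_space (\<mu> n)"
      by (rule prob_spaceI) (use \<mu>G[of n 0] Fpos[of n c] in simp)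
    then show ?thesis using \<nu>(2) by (simp add: real_distribution_def real_distribution_axioms_def \<mu>_def)
  qed
  define V where "V = (\<lambda>s. s + c) -` U"
  have V: "open V" "0 \<in> V" unfolding V_def using U by (auto intro!: continuous_open_vimage continuous_intros)
  have lim': "(\<lambda>n. F n (s + c) / F n c) \<longlonglongrightarrow> \<Phi> (s + c) / \<Phi> c" if "s \<in> V" for s
    using that U \<Phi>c by (intro tendsto_divide lim) (auto simp: V_def)
  have nn: "0 \<le> F n (s + c) / F n c" for n s using Fpos[of n c] Fpos[of n "s + c"] by simp
  obtain M where M: "real_distribution M"
    and MV: "\<And>s. s \<in> V \<Longrightarrow> (\<integral>\<^sup>+x. ennreal (exp (s * x)) \<partial>M) = ennreal (\<Phi> (s + c) / \<Phi> c)"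
    using weak_limit_of_convergent_mgfs[OF \<mu> \<mu>G nn V lim'] by blast
  define \<nu>\<^sub>0 where "\<nu>\<^sub>0 = density M (\<lambda>x. ennreal (\<Phi> c * exp ((- c) * x)))"
  have sM: "sets M = sets borel" using M by (simp add: real_distribution_def real_distribution_axioms_def)
  show ?thesis
  proof (intro exI conjI ballI)
    show "sets \<nu>\<^sub>0 = sets borel" by (simp add: \<nu>\<^sub>0_def sM)
    fix t assume "t \<in> U"
    have "0 \<le> \<Phi> t" using Fpos by (intro LIMSEQ_le_const[OF lim[OF \<open>t \<in> U\<close>]]) (auto intro: less_imp_le)
    have "mgf \<nu>\<^sub>0 t = enn2ereal (ennreal (\<Phi> c) * (\<integral>\<^sup>+x. ennreal (exp ((t + - c) * x)) \<partial>M))"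
      unfolding mgf_def \<nu>\<^sub>0_def nn_integral_exp_density_exp[OF sM less_imp_le[OF \<Phi>c]] ..
    also have "\<dots> = ereal (\<Phi> t)"
      using MV[of "t + - c"] \<open>t \<in> U\<close> \<Phi>c \<open>0 \<le> \<Phi> t\<close> by (simp add: V_def ennreal_mult'[symmetric])
    finally show "mgf \<nu>\<^sub>0 t = ereal (\<Phi> t)" .
  qed
qed

section \<open>Identifying the limit\<close>

lemma eq_on_dom_if_eq_on_interior:
  assumes g1: "convex_fun g1" "lsc_fun g1" "\<And>x. 0 \<le> g1 x"
    and g2: "convex_fun g2" "lsc_fun g2" "\<And>x. 0 \<le> g2 x"
    and c: "c \<in> interior (dom_f g1)"
    and eq: "\<And>t. t \<in> interior (dom_f g1) \<Longrightarrow> g1 t = g2 t"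
    and \<theta>: "\<theta> \<in> dom_f g1"
  shows "g1 \<theta> = g2 \<theta>"
proof -
  define l where "l k = inverse (real (Suc k))" for k
  have l: "l \<longlonglongrightarrow> 0" "\<And>k. 0 < l k" "\<And>k. l k \<le> 1"
    unfolding l_def by (rule LIMSEQ_inverse_real_of_nat) (simp_all add: inverse_le_1_iff)
  have "\<theta> - l k *\<^sub>R (\<theta> - c) \<in> interior (dom_f g1)" for k
    by (rule mem_interior_convex_shrink[OF convex_dom_f[OF g1(1)] c \<theta> l(2) l(3)])
  then have seg: "g1 (l k * c + (1 - l k) * \<theta>) = g2 (l k * c + (1 - l k) * \<theta>)" for k
    by (intro eq) (simp add: algebra_simps)
  have "g1 c < \<infinity>" using c interior_subset by (force simp: dom_f_def)
  moreover have "g2 c < \<infinity>" using calculation eq[OF c] by simp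
  ultimately have "(\<lambda>k. g1 (l k * c + (1 - l k) * \<theta>)) \<longlonglongrightarrow> g1 \<theta>" "(\<lambda>k. g2 (l k * c + (1 - l k) * \<theta>)) \<longlonglongrightarrow> g2 \<theta>"
    using l less_imp_le[OF l(2)] by (auto intro!: convex_fun_tendsto_segment g1 g2)
  then show ?thesis unfolding seg by (rule LIMSEQ_unique)
qed

lemma in_XB_imp_finite_mgf:
  assumes "in_XB g"
  shows "\<exists>\<nu> F. prob_space \<nu> \<and> sets \<nu> = sets borel \<and> (\<forall>\<theta>. 0 < F \<theta>)
    \<and> (\<forall>\<theta>. (\<integral>\<^sup>+x. ennreal (exp (\<theta> * x)) \<partial>\<nu>) = ennreal (F \<theta>)) \<and> g = (\<lambda>\<theta>. ereal (F \<theta>))"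
proof -
  obtain \<nu> K where \<nu>: "prob_space \<nu>" "sets \<nu> = sets borel" and K: "compact K" "K \<in> sets \<nu>" "measure \<nu> K = 1"
    and g: "g = mgf \<nu>"
    using assms unfolding in_XB_def real_prob_measure_def by blast
  define F where "F \<theta> = enn2real (\<integral>\<^sup>+x. ennreal (exp (\<theta> * x)) \<partial>\<nu>)" for \<theta>
  have F: "(\<integral>\<^sup>+x. ennreal (exp (\<theta> * x)) \<partial>\<nu>) = ennreal (F \<theta>)" for \<theta>
    unfolding F_def using nn_integral_exp_less_top_compact[OF \<nu>(1) K] by simp
  have "0 < F \<theta>" for \<theta> using nn_integral_exp_pos[OF \<nu>] F by (metis ennreal_less_zero_iff)
  moreover have "g = (\<lambda>\<theta>. ereal (F \<theta>))"
    using calculation by (simp add: g mgf_def F fun_eq_iff less_imp_le)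
  ultimately show ?thesis using \<nu> F by blast
qed

lemma mgf_return_0_on_dom:
  assumes "convex_fun f" "interior (dom_f f) = {}" "f 0 = 1" "\<theta> \<in> dom_f f"
  shows "f \<theta> = mgf (return borel 0) \<theta>"
proof -
  have "0 \<in> dom_f f" using assms(3) by (simp add: dom_f_def)
  then have "\<theta> = 0" by (rule convex_real_interior_empty[OF convex_dom_f[OF assms(1)] assms(2) assms(4)])
  moreover have "mgf (return borel (0::real)) 0 = 1"
    by (simp add: mgf_zero_eq_1_iff prob_space_return)
  ultimately show ?thesis using assms(3) by simp
qed

lemma mgf_on_dom_of_AW_limit:
  fixes F :: "nat \<Rightarrow> real \<Rightarrow> real"
  assumes \<nu>: "\<And>n. prob_space (\<nu> n)" "\<And>n. sets (\<nu> n) = sets borel"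
    and F: "\<And>n \<theta>. (\<integral>\<^sup>+x. ennreal (exp (\<theta> * x)) \<partial>\<nu> n) = ennreal (F n \<theta>)" and Fpos: "\<And>n \<theta>. 0 < F n \<theta>"
    and conv: "\<And>n. convex_on UNIV (F n)"
    and AW: "AW_conv (\<lambda>n \<theta>. ereal (F n \<theta>)) f" and f: "in_XM' f" and f0: "f 0 = 1"
  shows "\<exists>M. real_prob_measure M \<and> (\<forall>\<theta>\<in>dom_f f. f \<theta> = mgf M \<theta>)"
proof -
  have fconv: "convex_fun f" and flsc: "lsc_fun f" and fnn: "\<And>\<theta>. 0 \<le> f \<theta>"
    using f by (auto simp: in_XM'_def)
  have "0 \<in> dom_f f" using f0 by (simp add: dom_f_def)
  show ?thesis
  proof (cases "interior (dom_f f) = {}")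
    case True
    have "real_prob_measure (return borel (0::real))"
      by (simp add: real_prob_measure_def prob_space_return)
    then show ?thesis using mgf_return_0_on_dom[OF fconv True f0] by blast
  next
    case False
    let ?U = "interior (dom_f f)"
    obtain d where d: "d > 0" "\<And>t. \<bar>t - 0\<bar> < d \<Longrightarrow> 0 < f t" using lsc_fun_ball[OF flsc, of 0 0] f0 by auto
    have "0 \<in> closure ?U"
      using convex_closure_interior[OF convex_dom_f[OF fconv] False] closure_subset \<open>0 \<in> dom_f f\<close> by blast
    then obtain c where c: "c \<in> ?U" "0 < f c" using d by (force simp: closure_approachable dist_real_def)
    have fin: "f t = ereal (real_of_ereal (f t))" if "t \<in> ?U" for t
      using that interior_subset fnn[of t] by (cases "f t") (auto simp: dom_f_def)
    have lim: "(\<lambda>n. F n t) \<longlonglongrightarrow> real_of_ereal (f t)" if "t \<in> ?U" for t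
    proof -
      have "(\<lambda>n. ereal (F n t)) \<longlonglongrightarrow> ereal (real_of_ereal (f t))"
        using AW_conv_tendsto_interior[OF AW conv less_imp_le[OF Fpos] flsc that] fin[OF that] by simp
      then show ?thesis by (simp add: lim_ereal)
    qed
    have "0 < real_of_ereal (f c)" using c(2) by (subst (asm) fin[OF c(1)]) simp
    from measure_with_limit_mgf[OF \<nu> F Fpos open_interior c(1) this lim]
    obtain \<nu>\<^sub>0 where \<nu>\<^sub>0: "sets \<nu>\<^sub>0 = sets borel" and U: "\<And>t. t \<in> ?U \<Longrightarrow> mgf \<nu>\<^sub>0 t = ereal (real_of_ereal (f t))"
      by blast
    have "0 \<le> mgf \<nu>\<^sub>0 x" for x by (simp add: mgf_def)
    moreover have "f t = mgf \<nu>\<^sub>0 t" if "t \<in> ?U" for t using U[OF that] fin[OF that] by simp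
    ultimately have agree: "f \<theta> = mgf \<nu>\<^sub>0 \<theta>" if "\<theta> \<in> dom_f f" for \<theta>
      using eq_on_dom_if_eq_on_interior[OF fconv flsc fnn convex_fun_mgf[OF \<nu>\<^sub>0] lsc_fun_mgf[OF \<nu>\<^sub>0] _ c(1) _ that]
      by blast
    then have "prob_space \<nu>\<^sub>0" using \<open>0 \<in> dom_f f\<close> f0 mgf_zero_eq_1_iff by metis
    then show ?thesis using agree \<nu>\<^sub>0 by (auto simp: real_prob_measure_def)
  qed
qed

theorem mainTheorem4:
  fixes fs :: "nat \<Rightarrow> real \<Rightarrow> ereal" and f :: "real \<Rightarrow> ereal"
  assumes "\<And>n. in_XB (fs n)"
    and "\<And>n. in_XM' (fs n)"
    and "in_XM' f"
    and "AW_conv fs f"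
  shows "is_MGF f \<or> f 0 < 1 \<or> mimics_MGF f"
proof -
  have "\<forall>n. \<exists>\<nu> F. prob_space \<nu> \<and> sets \<nu> = sets borel \<and> (\<forall>\<theta>. 0 < F \<theta>)
    \<and> (\<forall>\<theta>. (\<integral>\<^sup>+x. ennreal (exp (\<theta> * x)) \<partial>\<nu>) = ennreal (F \<theta>)) \<and> fs n = (\<lambda>\<theta>. ereal (F \<theta>))"
    using assms(1) in_XB_imp_finite_mgf by blast
  then obtain \<nu> F where \<nu>: "\<And>n. prob_space (\<nu> n)" "\<And>n. sets (\<nu> n) = sets borel"
    and Fpos: "\<And>n \<theta>. 0 < F n \<theta>" and F: "\<And>n \<theta>. (\<integral>\<^sup>+x. ennreal (exp (\<theta> * x)) \<partial>\<nu> n) = ennreal (F n \<theta>)"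
    and fs: "fs = (\<lambda>n \<theta>. ereal (F n \<theta>))"
    by metis
  have conv: "convex_on UNIV (F n)" for n
    using assms(2)[of n] by (intro convex_on_if_convex_fun) (simp add: in_XM'_def fs)
  have "f 0 \<le> liminf (\<lambda>n. fs n 0)"
    using assms(3) by (intro AW_conv_le_liminf[OF assms(4)] epi_nonempty) (auto simp: in_XM'_def)
  moreover have "fs n 0 = 1" for n
    using F[of n 0] prob_space.emeasure_space_1[OF \<nu>(1)] Fpos[of n 0] by (simp add: fs)
  ultimately have "f 0 \<le> 1" by (simp add: Liminf_const)
  then consider "f 0 < 1" | "f 0 = 1" by fastforce
  then show ?thesis
  proof cases
    case 2
    then show ?thesis
      using mgf_on_dom_of_AW_limit[OF \<nu> F Fpos conv assms(4)[unfolded fs] assms(3)]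
      unfolding mimics_MGF_def by blast
  qed simp
qed

end
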